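(* Let $(N,+,* )$ be a nilpotent ring with adjoint operation $x\circ y=x+y+x*y$, let $S$ be a subring and $I$ a two-sided ideal of $N$ with $S\cap I=\{0\}$ and $N=S+I$. Then every $x\in N$ can be written uniquely as $x=s\circ i$ with $s\in S$, $i\in I$; define $x\bullet y=s\circ y\circ i$, so that $(N,+,\bullet)$ is a left brace, and let $r$ be its Yang–Baxter map. Let $X\subseteq N$ be such that $(X,r)$ is a solution of the set-theoretic Yang–Baxter equation. Let $J\subseteq I\cap X$ be a two-sided ideal of the ring $N$. Let $f,g:X\to X$ with $f$ $\mathcal G(X,r)$-equivariant, and let $k_1(x)=f(x)*g(x)$, $k_2(x)=f(x)+f(x)*g(x)$, assuming $k_1(X),k_2(X)\subseteq X$. Suppose that $g(x)*z=z*g(x)$ for all $z\in I$, $x\in X$; that $g(x+j)=g(x)$ whenever $x\in X$, $j\in J$ and $x+j\in X$; and that $k_1(x)-x\in J$ and $k_2(x)-x\in J$ for all $x\in X$. Then $k_1$ and $k_2$ are reflections of $(X,r)$.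
   Context: A (left) brace is a triple $(B,+,\circ)$ with $(B,+)$ abelian group, $(B,\circ)$ group, and $x\circ(y+z)=x\circ y+x\circ z-x$. The Yang–Baxter map of the brace $(N,+,\bullet)$ is $r(x,y)=(\sigma_x(y),\tau_y(x))$ with $\sigma_x(y)=x\bullet y-x$ and $\tau_y(x)=(\sigma_x(y))^{-1}\bullet x-(\sigma_x(y))^{-1}$, inverses taken in $(N,\bullet)$. For $X\subseteq N$, $(X,r)$ is a solution of the set-theoretic Yang–Baxter equation if $r(X\times X)\subseteq X\times X$ and $(\mathrm{id}\times r)(r\times\mathrm{id})(\mathrm{id}\times r)=(r\times\mathrm{id})(\mathrm{id}\times r)(r\times\mathrm{id})$ on $X^3$. A map $k:X\to X$ is a reflection of $(X,r)$ if $r(\mathrm{id}\times k)r(\mathrm{id}\times k)=(\mathrm{id}\times k)r(\mathrm{id}\times k)r$ on $X\times X$; $k$ is $\mathcal G(X,r)$-equivariant if $k\sigma_x=\sigma_x k$ on $X$ for every $x\in X$. *)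

theory Defs
  imports Main
begin

text \<open>The ring N is the whole carrier of a (not necessarily unital, associative) ring type.\<close>

fun nprod :: "'a::ring list \<Rightarrow> 'a" where
  "nprod [] = 0"
| "nprod [x] = x"
| "nprod (x # y # xs) = x * nprod (y # xs)"

definition nilpotent_ring :: "'a::ring itself \<Rightarrow> bool" where
  "nilpotent_ring _ \<longleftrightarrow> (\<exists>n>0. \<forall>xs::'a list. length xs = n \<longrightarrow> nprod xs = 0)"

definition adj :: "'a::ring \<Rightarrow> 'a \<Rightarrow> 'a" where
  "adj x y = x + y + x * y"

definition is_subring :: "'a::ring set \<Rightarrow> bool" where
  "is_subring S \<longleftrightarrow> 0 \<in> S \<and> (\<forall>x\<in>S. \<forall>y\<in>S. x + y \<in> S \<and> x * y \<in> S) \<and> (\<forall>x\<in>S. - x \<in> S)"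

definition is_ideal :: "'a::ring set \<Rightarrow> bool" where
  "is_ideal I \<longleftrightarrow> 0 \<in> I \<and> (\<forall>x\<in>I. \<forall>y\<in>I. x + y \<in> I) \<and> (\<forall>x\<in>I. - x \<in> I)
     \<and> (\<forall>x\<in>I. \<forall>n. n * x \<in> I \<and> x * n \<in> I)"

definition s_part :: "'a::ring set \<Rightarrow> 'a set \<Rightarrow> 'a \<Rightarrow> 'a" where
  "s_part S I x = (THE s. s \<in> S \<and> (\<exists>i\<in>I. x = adj s i))"

definition i_part :: "'a::ring set \<Rightarrow> 'a set \<Rightarrow> 'a \<Rightarrow> 'a" where
  "i_part S I x = (THE i. i \<in> I \<and> (\<exists>s\<in>S. x = adj s i))"

definition bul :: "'a::ring set \<Rightarrow> 'a set \<Rightarrow> 'a \<Rightarrow> 'a \<Rightarrow> 'a" where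
  "bul S I x y = adj (adj (s_part S I x) y) (i_part S I x)"

definition binv :: "'a::ring set \<Rightarrow> 'a set \<Rightarrow> 'a \<Rightarrow> 'a" where
  "binv S I x = (THE z. bul S I z x = 0 \<and> bul S I x z = 0)"

definition sig :: "'a::ring set \<Rightarrow> 'a set \<Rightarrow> 'a \<Rightarrow> 'a \<Rightarrow> 'a" where
  "sig S I x y = bul S I x y - x"

definition tau :: "'a::ring set \<Rightarrow> 'a set \<Rightarrow> 'a \<Rightarrow> 'a \<Rightarrow> 'a" where
  "tau S I y x = bul S I (binv S I (sig S I x y)) x - binv S I (sig S I x y)"

definition ybmap :: "'a::ring set \<Rightarrow> 'a set \<Rightarrow> 'a \<times> 'a \<Rightarrow> 'a \<times> 'a" where
  "ybmap S I p = (sig S I (fst p) (snd p), tau S I (snd p) (fst p))"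

definition r12 :: "('a \<times> 'a \<Rightarrow> 'a \<times> 'a) \<Rightarrow> 'a \<times> 'a \<times> 'a \<Rightarrow> 'a \<times> 'a \<times> 'a" where
  "r12 r t = (case t of (x, y, z) \<Rightarrow> (fst (r (x, y)), snd (r (x, y)), z))"

definition r23 :: "('a \<times> 'a \<Rightarrow> 'a \<times> 'a) \<Rightarrow> 'a \<times> 'a \<times> 'a \<Rightarrow> 'a \<times> 'a \<times> 'a" where
  "r23 r t = (case t of (x, y, z) \<Rightarrow> (x, fst (r (y, z)), snd (r (y, z))))"

definition is_YB_solution :: "'a set \<Rightarrow> ('a \<times> 'a \<Rightarrow> 'a \<times> 'a) \<Rightarrow> bool" where
  "is_YB_solution X r \<longleftrightarrow> r ` (X \<times> X) \<subseteq> X \<times> X \<and>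
     (\<forall>t \<in> X \<times> X \<times> X. r23 r (r12 r (r23 r t)) = r12 r (r23 r (r12 r t)))"

definition idk :: "('a \<Rightarrow> 'a) \<Rightarrow> 'a \<times> 'a \<Rightarrow> 'a \<times> 'a" where
  "idk k p = (fst p, k (snd p))"

definition is_reflection :: "'a set \<Rightarrow> ('a \<times> 'a \<Rightarrow> 'a \<times> 'a) \<Rightarrow> ('a \<Rightarrow> 'a) \<Rightarrow> bool" where
  "is_reflection X r k \<longleftrightarrow>
     (\<forall>p \<in> X \<times> X. r (idk k (r (idk k p))) = idk k (r (idk k (r p))))"

text \<open>G(X,r)-equivariance: k commutes with every \<sigma>_x (x \<in> X) on X.\<close>
definition equivariant :: "'a::ring set \<Rightarrow> 'a set \<Rightarrow> 'a set \<Rightarrow> ('a \<Rightarrow> 'a) \<Rightarrow> bool" where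
  "equivariant S I X k \<longleftrightarrow> (\<forall>x\<in>X. \<forall>y\<in>X. k (sig S I x y) = sig S I x (k y))"

end

theory Submission
  imports Defs
begin

text \<open>In a nilpotent ring every \<open>x\<close> has the adjoint inverse \<open>\<Sum>\<^sub>k\<^sub>\<ge>\<^sub>1 (-x)^k\<close>, so \<open>(N, \<circ>)\<close> is a
  group and \<open>S \<inter> I = 0\<close> makes the factorisation \<open>x = s \<circ> i\<close> unique. For \<open>w \<in> I\<close> it is \<open>0 \<circ> w\<close>,
  hence \<open>w \<bullet> y = y \<circ> w\<close>, and on \<open>I\<close> the Yang--Baxter map becomes
  \<open>r(x, y) = (\<rho>\<^sub>x y, \<rho>\<^bsub>(\<rho>\<^sub>x y)\<^sup>-\<^sup>1\<^esub> x)\<close> with \<open>\<rho>\<^sub>z y = y + y z\<close> and \<open>\<rho>\<^sub>a \<rho>\<^sub>b = \<rho>\<^bsub>b \<circ> a\<^esub>\<close>.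
  A map \<open>k\<close> of an ideal \<open>J \<subseteq> I\<close> commuting with every \<open>\<rho>\<^sub>z\<close> is then a reflection: both sides
  of the reflection equation evaluate to \<open>(k x, \<rho>\<^bsub>(k x)\<^sup>-\<^sup>1\<^esub> (k (\<rho>\<^sub>x y)))\<close>.

  The hypotheses give \<open>f x = k\<^sub>2 x - k\<^sub>1 x \<in> J\<close>, hence \<open>x \<in> J\<close>, so \<open>X = J\<close>. On \<open>J\<close> the map \<open>g\<close> is a
  constant \<open>c\<close> commuting with \<open>J\<close>, \<open>f\<close> commutes with the \<open>\<rho>\<^sub>z = \<sigma>\<^sub>z\<close> by equivariance, and so do
  \<open>k\<^sub>1 = f c\<close> and \<open>k\<^sub>2 = \<rho>\<^sub>c f\<close>, because \<open>c \<circ> z = z \<circ> c\<close> gives \<open>\<rho>\<^sub>c \<rho>\<^sub>z = \<rho>\<^sub>z \<rho>\<^sub>c\<close>.\<close>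

lemma adj_assoc: "adj (adj a b) c = adj a (adj b (c::'a::ring))"
  by (simp add: adj_def algebra_simps)

lemma adj_0_left [simp]: "adj 0 x = (x::'a::ring)"
  and adj_0_right [simp]: "adj x 0 = (x::'a::ring)"
  by (simp_all add: adj_def)

lemma subring_0: "is_subring S \<Longrightarrow> 0 \<in> S"
  and subring_mult: "is_subring S \<Longrightarrow> a \<in> S \<Longrightarrow> b \<in> S \<Longrightarrow> a * b \<in> S"
  and subring_adj: "is_subring S \<Longrightarrow> a \<in> S \<Longrightarrow> b \<in> S \<Longrightarrow> adj a b \<in> S"
  unfolding is_subring_def adj_def by blast+

lemma subring_uminus: "is_subring S \<Longrightarrow> a \<in> S \<Longrightarrow> - a \<in> S"
  unfolding is_subring_def by blast

lemma subring_diff: "is_subring S \<Longrightarrow> a \<in> S \<Longrightarrow> b \<in> S \<Longrightarrow> a - b \<in> S"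
  unfolding is_subring_def diff_conv_add_uminus by blast

lemma ideal_0: "is_ideal I \<Longrightarrow> 0 \<in> I"
  and ideal_mult_left: "is_ideal I \<Longrightarrow> b \<in> I \<Longrightarrow> a * b \<in> I"
  and ideal_mult_right: "is_ideal I \<Longrightarrow> a \<in> I \<Longrightarrow> a * b \<in> I"
  and ideal_adj: "is_ideal I \<Longrightarrow> a \<in> I \<Longrightarrow> b \<in> I \<Longrightarrow> adj a b \<in> I"
  unfolding is_ideal_def adj_def by blast+

lemma ideal_add: "is_ideal I \<Longrightarrow> a \<in> I \<Longrightarrow> b \<in> I \<Longrightarrow> a + b \<in> I"
  unfolding is_ideal_def by blast

lemma ideal_uminus: "is_ideal I \<Longrightarrow> a \<in> I \<Longrightarrow> - a \<in> I"
  unfolding is_ideal_def by blast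

lemma ideal_diff: "is_ideal I \<Longrightarrow> a \<in> I \<Longrightarrow> b \<in> I \<Longrightarrow> a - b \<in> I"
  unfolding is_ideal_def diff_conv_add_uminus by blast

lemma ideal_mem_of_shifts:
  assumes J: "is_ideal J" and "f * g - x \<in> J" and "(f + f * g) - x \<in> J"
  shows "x \<in> J"
proof -
  have "f \<in> J"
    using ideal_diff[OF J assms(3,2)] by (simp add: algebra_simps)
  then have "f * g \<in> J"
    by (rule ideal_mult_right[OF J])
  from ideal_diff[OF J this assms(2)] show "x \<in> J"
    by simp
qed

text \<open>The truncated series \<open>qinv x n = \<Sum>k=1..n. (-x)^k\<close>: an adjoint inverse of \<open>x\<close>
  as soon as \<open>x^(n+1) = 0\<close>.\<close>
fun qinv :: "'a::ring \<Rightarrow> nat \<Rightarrow> 'a" where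
  "qinv x 0 = 0"
| "qinv x (Suc n) = - x - x * qinv x n"

lemma qinv_commute: "x * qinv x n = qinv x n * x"
proof (induction n)
  case (Suc n)
  have "x * qinv x (Suc n) = - (x * x) - x * (x * qinv x n)"
    by (simp add: algebra_simps)
  also have "\<dots> = - (x * x) - x * (qinv x n * x)"
    by (simp only: Suc)
  also have "\<dots> = qinv x (Suc n) * x"
    by (simp add: algebra_simps)
  finally show ?case .
qed simp

lemma adj_qinv: "adj x (qinv x n) = - nprod (replicate (Suc n) (- x))"
proof (induction n)
  case 0
  then show ?case by (simp add: adj_def)
next
  case (Suc n)
  have "adj x (qinv x (Suc n)) = - (x * adj x (qinv x n))"
    by (simp add: adj_def algebra_simps)
  with Suc show ?case by simp
qed

lemma adj_qinv_swap: "adj (qinv x n) x = adj x (qinv x n)"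
  by (simp add: adj_def qinv_commute add.commute)

lemma subring_qinv: "is_subring S \<Longrightarrow> x \<in> S \<Longrightarrow> qinv x n \<in> S"
  by (induction n) (simp_all add: subring_0 subring_uminus subring_diff subring_mult)

lemma ideal_qinv: "is_ideal I \<Longrightarrow> x \<in> I \<Longrightarrow> qinv x n \<in> I"
  by (induction n) (simp_all add: ideal_0 ideal_uminus ideal_diff ideal_mult_left)

lemma nilpotent_ring_nil_bound:
  assumes "nilpotent_ring TYPE('a::ring)"
  obtains m where "\<And>x::'a. nprod (replicate (Suc m) x) = 0"
proof -
  obtain n where "n > 0" and n: "\<forall>xs::'a list. length xs = n \<longrightarrow> nprod xs = 0"
    using assms unfolding nilpotent_ring_def by blast
  then obtain m where "n = Suc m"
    using gr0_conv_Suc by blast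
  with n have "nprod (replicate (Suc m) x) = 0" for x :: 'a
    by simp
  then show thesis
    by (rule that)
qed

text \<open>\<open>ract z\<close> is the map \<open>\<rho>\<^sub>z y = y \<circ> z - z\<close>; for \<open>z \<in> I\<close> it is \<open>\<sigma>\<^sub>z\<close>.\<close>
definition ract :: "'a::ring \<Rightarrow> 'a \<Rightarrow> 'a" where
  "ract z y = y + y * z"

lemma ract_0 [simp]: "ract 0 y = y"
  by (simp add: ract_def)

lemma ract_ract: "ract a (ract b y) = ract (adj b a) y"
  by (simp add: ract_def adj_def algebra_simps)

lemma ideal_ract: "is_ideal I \<Longrightarrow> y \<in> I \<Longrightarrow> ract z y \<in> I"
  unfolding ract_def is_ideal_def by blast

lemma ract_mult_commute: "c * z = z * c \<Longrightarrow> ract z a * c = ract z (a * c)"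
  by (simp add: ract_def algebra_simps)

lemma ract_commute: "c * z = z * c \<Longrightarrow> ract c (ract z a) = ract z (ract c a)"
  by (simp add: ract_ract adj_def add.commute add.left_commute)

locale nil_ring_decomposition =
  fixes S I :: "'a::ring set" and m :: nat
  assumes nil: "\<And>x::'a. nprod (replicate (Suc m) x) = 0"
    and subring: "is_subring S" and ideal: "is_ideal I"
    and trivial_inter: "S \<inter> I = {0}" and sum_decomposition: "\<And>x. \<exists>s\<in>S. \<exists>i\<in>I. x = s + i"
begin

lemma adj_qinv_right [simp]: "adj (x::'a) (qinv x m) = 0"
  using adj_qinv[of x m] nil[of "- x"] by simp

lemma adj_qinv_left [simp]: "adj (qinv x m) (x::'a) = 0"
  by (simp add: adj_qinv_swap)

lemma decomposition_unique:
  assumes s: "s \<in> S" "s' \<in> S" and i: "i \<in> I" "i' \<in> I" and eq: "adj s i = adj s' i'"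
  shows "s = s' \<and> i = i'"
proof -
  let ?a = "qinv s' m" and ?b = "qinv i m"
  have i': "adj (adj ?a s) i = i'"
  proof -
    have "adj (adj ?a s) i = adj ?a (adj s' i')"
      by (simp add: adj_assoc eq)
    also have "\<dots> = i'"
      by (simp flip: adj_assoc)
    finally show ?thesis .
  qed
  have "adj ?a s = adj (adj (adj ?a s) i) ?b"
    by (simp add: adj_assoc)
  then have "adj ?a s = adj i' ?b"
    by (simp only: i')
  moreover have "adj ?a s \<in> S"
    using subring_adj[OF subring subring_qinv[OF subring s(2)] s(1)] .
  moreover have "adj i' ?b \<in> I"
    using ideal_adj[OF ideal i(2) ideal_qinv[OF ideal i(1)]] .
  ultimately have "adj ?a s = 0"
    using trivial_inter by auto
  then have "s' = s"
    using adj_assoc[of s' ?a s] by simp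
  with i' \<open>adj ?a s = 0\<close> show ?thesis
    by simp
qed

lemma decomposition_exists: "\<exists>s\<in>S. \<exists>i\<in>I. x = adj s i"
proof -
  obtain s i where s: "s \<in> S" and i: "i \<in> I" and x: "x = s + i"
    using sum_decomposition by blast
  let ?a = "qinv s m"
  have "adj ?a x = adj ?a s + (i + ?a * i)"
    unfolding x by (simp add: adj_def algebra_simps)
  then have "adj ?a x \<in> I"
    using ideal i by (simp add: ideal_add ideal_mult_left)
  moreover have "x = adj s (adj ?a x)"
    by (simp flip: adj_assoc)
  ultimately show ?thesis
    using s by blast
qed

lemma decomposition_ex1: "\<exists>!p. fst p \<in> S \<and> snd p \<in> I \<and> x = adj (fst p) (snd p)"
proof -
  obtain s i where si: "s \<in> S" "i \<in> I" "x = adj s i"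
    using decomposition_exists by blast
  show ?thesis
  proof (rule ex1I[of _ "(s, i)"])
    fix p :: "'a \<times> 'a"
    assume p: "fst p \<in> S \<and> snd p \<in> I \<and> x = adj (fst p) (snd p)"
    then have "adj s i = adj (fst p) (snd p)"
      using si(3) by simp
    with p si(1,2) have "s = fst p \<and> i = snd p"
      using decomposition_unique by blast
    then show "p = (s, i)"
      by auto
  qed (use si in simp)
qed

lemma s_part_adj:
  assumes "s \<in> S" "i \<in> I"
  shows "s_part S I (adj s i) = s"
  unfolding s_part_def
proof (rule the_equality)
  fix s'
  assume "s' \<in> S \<and> (\<exists>i'\<in>I. adj s i = adj s' i')"
  then show "s' = s"
    using decomposition_unique[OF assms(1) _ assms(2)] by fastforce
qed (use assms in blast)

lemma i_part_adj:
  assumes "s \<in> S" "i \<in> I"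
  shows "i_part S I (adj s i) = i"
  unfolding i_part_def
proof (rule the_equality)
  fix i'
  assume "i' \<in> I \<and> (\<exists>s'\<in>S. adj s i = adj s' i')"
  then show "i' = i"
    using decomposition_unique[OF assms(1) _ assms(2)] by fastforce
qed (use assms in blast)

lemma bul_ideal: "w \<in> I \<Longrightarrow> bul S I w y = adj y w"
  using s_part_adj[of 0 w] i_part_adj[of 0 w] subring_0[OF subring]
  unfolding bul_def by simp

lemma binv_ideal: "w \<in> I \<Longrightarrow> binv S I w = qinv w m"
  unfolding binv_def
proof (rule the_equality)
  assume w: "w \<in> I"
  then show "bul S I (qinv w m) w = 0 \<and> bul S I w (qinv w m) = 0"
    using ideal_qinv[OF ideal w] by (simp add: bul_ideal)
  fix z
  assume "bul S I z w = 0 \<and> bul S I w z = 0"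
  then have "adj z w = 0"
    using w by (simp add: bul_ideal)
  then show "z = qinv w m"
    using adj_assoc[of z w "qinv w m"] by simp
qed

lemma sig_ideal: "x \<in> I \<Longrightarrow> sig S I x y = ract x y"
  by (simp add: sig_def ract_def bul_ideal adj_def)

lemma ybmap_ideal:
  assumes "x \<in> I" "y \<in> I"
  shows "ybmap S I (x, y) = (ract x y, ract (qinv (ract x y) m) x)"
proof -
  have "qinv (ract x y) m \<in> I"
    using ideal_qinv[OF ideal ideal_ract[OF ideal assms(2)]] .
  then show ?thesis
    using assms ideal_ract[OF ideal]
    by (simp add: ybmap_def tau_def sig_ideal binv_ideal bul_ideal adj_def ract_def)
qed

lemma ract_qinv_cancel: "ract w (ract (qinv w m) (v::'a)) = v"
  by (simp add: ract_ract)

lemma is_reflection_on_ideal: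
  assumes J: "is_ideal J" "J \<subseteq> I" and kJ: "k ` J \<subseteq> J"
    and k_ract: "\<And>y z. y \<in> J \<Longrightarrow> z \<in> J \<Longrightarrow> k (ract z y) = ract z (k y)"
  shows "is_reflection J (ybmap S I) k"
  unfolding is_reflection_def
proof clarify
  fix x y
  assume x: "x \<in> J" and y: "y \<in> J"
  have k: "\<And>v. v \<in> J \<Longrightarrow> k v \<in> J" and q: "\<And>v. v \<in> J \<Longrightarrow> qinv v m \<in> J"
    using kJ ideal_qinv[OF J(1)] by auto
  have r: "\<And>u v. u \<in> J \<Longrightarrow> v \<in> J \<Longrightarrow> ybmap S I (u, v) = (ract u v, ract (qinv (ract u v) m) u)"
    using ybmap_ideal J(2) by blast
  define a where "a = ract x y"
  define b where "b = ract (qinv a m) x"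
  define d where "d = ract (qinv (k a) m) x"
  have a: "a \<in> J" and b: "b \<in> J" and d: "d \<in> J"
    using ideal_ract[OF J(1) x] ideal_ract[OF J(1) y] by (simp_all add: a_def b_def d_def)
  have "ybmap S I (x, k y) = (k a, d)"
    using r[OF x k[OF y]] k_ract[OF y x] by (simp add: a_def d_def)
  moreover have "ybmap S I (k a, k d) = (k x, ract (qinv (k x) m) (k a))"
    using r[OF k[OF a] k[OF d]] k_ract[OF d k[OF a]] by (simp add: d_def ract_qinv_cancel)
  moreover have "ybmap S I (x, y) = (a, b)"
    using r[OF x y] by (simp add: a_def b_def)
  moreover have "ybmap S I (a, k b) = (k x, ract (qinv (k x) m) a)"
    using r[OF a k[OF b]] k_ract[OF b a] by (simp add: b_def ract_qinv_cancel)
  moreover have "k (ract (qinv (k x) m) a) = ract (qinv (k x) m) (k a)"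
    using k_ract[OF a q[OF k[OF x]]] .
  ultimately show "ybmap S I (idk k (ybmap S I (idk k (x, y))))
      = idk k (ybmap S I (idk k (ybmap S I (x, y))))"
    by (simp add: idk_def)
qed

lemma is_reflection_mult_const:
  assumes J: "is_ideal J" "J \<subseteq> I" and kJ: "(\<lambda>x. f x * g x) ` J \<subseteq> J"
    and f_ract: "\<And>y z. y \<in> J \<Longrightarrow> z \<in> J \<Longrightarrow> f (ract z y) = ract z (f y)"
    and g_const: "\<And>y. y \<in> J \<Longrightarrow> g y = c" and c_comm: "\<And>z. z \<in> J \<Longrightarrow> c * z = z * c"
  shows "is_reflection J (ybmap S I) (\<lambda>x. f x * g x)"
proof (rule is_reflection_on_ideal[OF J kJ])
  fix y z
  assume y: "y \<in> J" and z: "z \<in> J"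
  show "f (ract z y) * g (ract z y) = ract z (f y * g y)"
    by (simp add: f_ract[OF y z] g_const y ideal_ract[OF J(1) y] ract_mult_commute[OF c_comm[OF z]])
qed

lemma is_reflection_ract_const:
  assumes J: "is_ideal J" "J \<subseteq> I" and kJ: "(\<lambda>x. ract (g x) (f x)) ` J \<subseteq> J"
    and f_ract: "\<And>y z. y \<in> J \<Longrightarrow> z \<in> J \<Longrightarrow> f (ract z y) = ract z (f y)"
    and g_const: "\<And>y. y \<in> J \<Longrightarrow> g y = c" and c_comm: "\<And>z. z \<in> J \<Longrightarrow> c * z = z * c"
  shows "is_reflection J (ybmap S I) (\<lambda>x. ract (g x) (f x))"
proof (rule is_reflection_on_ideal[OF J kJ])
  fix y z
  assume y: "y \<in> J" and z: "z \<in> J"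
  show "ract (g (ract z y)) (f (ract z y)) = ract z (ract (g y) (f y))"
    by (simp add: f_ract[OF y z] g_const y ideal_ract[OF J(1) y] ract_commute[OF c_comm[OF z]])
qed

end

theorem mainTheorem8:
  fixes S I J X :: "'a::ring set" and f g :: "'a \<Rightarrow> 'a"
  assumes nil: "nilpotent_ring TYPE('a)"
    and S: "is_subring S" and I: "is_ideal I"
    and SI: "S \<inter> I = {0}" and NSI: "\<forall>x. \<exists>s\<in>S. \<exists>i\<in>I. x = s + i"
    and sol: "is_YB_solution X (ybmap S I)"
    and J: "is_ideal J" and JIX: "J \<subseteq> I \<inter> X"
    and fX: "f ` X \<subseteq> X" and gX: "g ` X \<subseteq> X"
    and feq: "equivariant S I X f"
    and k1X: "(\<lambda>x. f x * g x) ` X \<subseteq> X"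
    and k2X: "(\<lambda>x. f x + f x * g x) ` X \<subseteq> X"
    and gcomm: "\<forall>z\<in>I. \<forall>x\<in>X. g x * z = z * g x"
    and ginv: "\<forall>x\<in>X. \<forall>j\<in>J. x + j \<in> X \<longrightarrow> g (x + j) = g x"
    and k1J: "\<forall>x\<in>X. f x * g x - x \<in> J"
    and k2J: "\<forall>x\<in>X. (f x + f x * g x) - x \<in> J"
  shows "(\<forall>x. \<exists>!p. fst p \<in> S \<and> snd p \<in> I \<and> x = adj (fst p) (snd p))
    \<and> is_reflection X (ybmap S I) (\<lambda>x. f x * g x)
    \<and> is_reflection X (ybmap S I) (\<lambda>x. f x + f x * g x)"
proof -
  obtain m where "\<And>x::'a. nprod (replicate (Suc m) x) = 0"
    using nilpotent_ring_nil_bound[OF nil] by blast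
  then interpret nil_ring_decomposition S I m
    using S I SI NSI by unfold_locales auto
  have X: "X = J"
    using JIX ideal_mem_of_shifts[OF J] k1J k2J by blast
  have JI: "J \<subseteq> I"
    using JIX by blast
  define c where "c = g 0"
  have g_const: "\<And>y. y \<in> J \<Longrightarrow> g y = c"
    using ginv ideal_0[OF J] X unfolding c_def by (metis add_0)
  have c_comm: "\<And>z. z \<in> J \<Longrightarrow> c * z = z * c"
    using gcomm ideal_0[OF J] X JI by (auto simp: c_def)
  have f_ract: "f (ract z y) = ract z (f y)" if "y \<in> J" "z \<in> J" for y z
  proof -
    have "f (sig S I z y) = sig S I z (f y)"
      using feq X that unfolding equivariant_def by blast
    with \<open>z \<in> J\<close> JI show ?thesis
      by (auto simp: sig_ideal)
  qed
  have "is_reflection J (ybmap S I) (\<lambda>x. f x * g x)"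
    using is_reflection_mult_const[OF J JI _ f_ract g_const c_comm] k1X X by simp
  moreover have "is_reflection J (ybmap S I) (\<lambda>x. ract (g x) (f x))"
    using is_reflection_ract_const[OF J JI _ f_ract g_const c_comm] k2X X by (simp add: ract_def)
  ultimately show ?thesis
    using decomposition_ex1 X by (simp add: ract_def)
qed

end
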